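(* The bound $$\int_{-\infty}^s\int_{-\infty}^{s'} \exp \bigl(-a|r-r'| - b|r-s|-c|r'-s'|-d|r-s'|-e|r'-s|\bigr)\,dr'\,dr \le \frac{10\, e^{-(d\wedge e)|s-s'|}}{(b+d)(c+e) + a((b+d)\wedge(c+e))}$$ holds for every $s,s' \in \mathbb{R}$ and every $a,b,c,d,e > 0$. *)

theory Defs
  imports "HOL-Analysis.Analysis"
begin

end

theory Submission
  imports Defs
begin

text \<open>
  The integrand is invariant under exchanging \<open>(r, s, b, d)\<close> with \<open>(r', s', c, e)\<close>, and so is
  the bound; by Tonelli we may therefore assume \<open>s \<le> s'\<close>. Then for \<open>r \<le> s\<close> we have
  \<open>\<bar>r - s'\<bar> = (s' - s) + (s - r)\<close>, which splits off the factor \<open>exp (- d * \<bar>s - s'\<bar>)\<close> and a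
  decay \<open>exp (- (b + d) * (s - r))\<close> in \<open>r\<close>. What remains depends on \<open>r'\<close> only through
  \<open>a * \<bar>r' - r\<bar> + c * \<bar>r' - s'\<bar> + e * \<bar>r' - s\<bar>\<close>, which dominates \<open>M * \<bar>r' - y\<bar>\<close> for
  \<open>M = max a (max c e)\<close> and a suitable \<open>y\<close>; so the \<open>r'\<close>-integral is at most \<open>2 / M\<close>.
  The double integral is thus at most \<open>2 * exp (- d * \<bar>s - s'\<bar>) / ((b + d) * M)\<close>, and the
  denominator of the claimed bound is at most \<open>(b + d) * (c + e + a) \<le> 3 * (b + d) * M\<close>.
\<close>

lemma nn_integral_exp_neg_atLeast_0:
  fixes k :: real
  assumes "k > 0"
  shows "(\<integral>\<^sup>+x\<in>{0..}. ennreal (exp (- k * x)) \<partial>lborel) = ennreal (1 / k)"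
  using nn_integral_has_integral_lebesgue'[OF _ has_integral_exp_minus_to_infinity[OF assms, of 0]]
  by simp

lemma nn_integral_exp_neg_atMost:
  fixes k p :: real
  assumes "k > 0"
  shows "(\<integral>\<^sup>+x\<in>{..p}. ennreal (exp (- k * (p - x))) \<partial>lborel) = ennreal (1 / k)"
proof -
  have "(\<integral>\<^sup>+x\<in>{..p}. ennreal (exp (- k * (p - x))) \<partial>lborel)
      = (\<integral>\<^sup>+x. ennreal (exp (- k * (p - (p + (-1) * x)))) * indicator {..p} (p + (-1) * x) \<partial>lborel)"
    by (subst nn_integral_real_affine[where c = "-1" and t = p]) auto
  also have "\<dots> = (\<integral>\<^sup>+x\<in>{0..}. ennreal (exp (- k * x)) \<partial>lborel)"
    by (auto intro!: nn_integral_cong simp: indicator_def)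
  finally show ?thesis
    using nn_integral_exp_neg_atLeast_0[OF assms] by simp
qed

lemma nn_integral_exp_neg_atLeast:
  fixes k p :: real
  assumes "k > 0"
  shows "(\<integral>\<^sup>+x\<in>{p..}. ennreal (exp (- k * (x - p))) \<partial>lborel) = ennreal (1 / k)"
proof -
  have "(\<integral>\<^sup>+x\<in>{p..}. ennreal (exp (- k * (x - p))) \<partial>lborel)
      = (\<integral>\<^sup>+x. ennreal (exp (- k * ((p + 1 * x) - p))) * indicator {p..} (p + 1 * x) \<partial>lborel)"
    by (subst nn_integral_real_affine[where c = 1 and t = p]) auto
  also have "\<dots> = (\<integral>\<^sup>+x\<in>{0..}. ennreal (exp (- k * x)) \<partial>lborel)"
    by (auto intro!: nn_integral_cong simp: indicator_def)
  finally show ?thesis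
    using nn_integral_exp_neg_atLeast_0[OF assms] by simp
qed

lemma nn_integral_exp_neg_abs_le:
  fixes k p :: real
  assumes "k > 0"
  shows "(\<integral>\<^sup>+x. ennreal (exp (- k * \<bar>x - p\<bar>)) \<partial>lborel) \<le> ennreal (2 / k)"
proof -
  have "(\<integral>\<^sup>+x. ennreal (exp (- k * \<bar>x - p\<bar>)) \<partial>lborel)
      \<le> (\<integral>\<^sup>+x. ennreal (exp (- k * (p - x))) * indicator {..p} x
                + ennreal (exp (- k * (x - p))) * indicator {p..} x \<partial>lborel)"
    by (intro nn_integral_mono) (auto simp: indicator_def abs_if)
  also have "\<dots> = (\<integral>\<^sup>+x\<in>{..p}. ennreal (exp (- k * (p - x))) \<partial>lborel)
                  + (\<integral>\<^sup>+x\<in>{p..}. ennreal (exp (- k * (x - p))) \<partial>lborel)"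
    by (intro nn_integral_add) auto
  also have "\<dots> = ennreal (2 / k)"
    unfolding nn_integral_exp_neg_atMost[OF assms] nn_integral_exp_neg_atLeast[OF assms]
    using assms by (simp flip: ennreal_plus)
  finally show ?thesis .
qed

lemma nn_integral_exp_neg_sum_abs_le:
  fixes a c e p q t :: real
  assumes "a \<ge> 0" "c \<ge> 0" "e \<ge> 0" "max a (max c e) > 0"
  shows "(\<integral>\<^sup>+x. ennreal (exp (- (a * \<bar>x - p\<bar> + c * \<bar>x - q\<bar> + e * \<bar>x - t\<bar>))) \<partial>lborel)
         \<le> ennreal (2 / max a (max c e))"
proof -
  define M where "M = max a (max c e)"
  obtain y where y: "\<And>x. M * \<bar>x - y\<bar> \<le> a * \<bar>x - p\<bar> + c * \<bar>x - q\<bar> + e * \<bar>x - t\<bar>"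
  proof -
    consider "M = a" | "M = c" | "M = e" unfolding M_def by linarith
    then show ?thesis
    proof cases
      case 1
      show ?thesis by (rule that[of p]) (use 1 assms in \<open>auto intro!: add_nonneg_nonneg\<close>)
    next
      case 2
      show ?thesis by (rule that[of q]) (use 2 assms in \<open>auto intro!: add_nonneg_nonneg\<close>)
    next
      case 3
      show ?thesis by (rule that[of t]) (use 3 assms in \<open>auto intro!: add_nonneg_nonneg\<close>)
    qed
  qed
  have "(\<integral>\<^sup>+x. ennreal (exp (- (a * \<bar>x - p\<bar> + c * \<bar>x - q\<bar> + e * \<bar>x - t\<bar>))) \<partial>lborel)
      \<le> (\<integral>\<^sup>+x. ennreal (exp (- M * \<bar>x - y\<bar>)) \<partial>lborel)"
  proof (intro nn_integral_mono ennreal_leI)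
    fix x
    show "exp (- (a * \<bar>x - p\<bar> + c * \<bar>x - q\<bar> + e * \<bar>x - t\<bar>)) \<le> exp (- M * \<bar>x - y\<bar>)"
      using y[of x] by simp
  qed
  also have "\<dots> \<le> ennreal (2 / M)"
    using assms by (intro nn_integral_exp_neg_abs_le) (simp add: M_def)
  finally show ?thesis unfolding M_def .
qed

lemma nn_integral_set_lborel_swap:
  fixes f :: "real \<Rightarrow> real \<Rightarrow> ennreal"
  assumes [measurable]: "case_prod f \<in> borel_measurable (lborel \<Otimes>\<^sub>M lborel)"
    and [measurable]: "A \<in> sets borel" "B \<in> sets borel"
  shows "(\<integral>\<^sup>+x\<in>A. (\<integral>\<^sup>+y\<in>B. f x y \<partial>lborel) \<partial>lborel)
       = (\<integral>\<^sup>+y\<in>B. (\<integral>\<^sup>+x\<in>A. f x y \<partial>lborel) \<partial>lborel)"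
proof -
  have "(\<integral>\<^sup>+x\<in>A. (\<integral>\<^sup>+y\<in>B. f x y \<partial>lborel) \<partial>lborel)
      = (\<integral>\<^sup>+x. (\<integral>\<^sup>+y. f x y * indicator B y * indicator A x \<partial>lborel) \<partial>lborel)"
    by (simp add: nn_integral_multc)
  also have "\<dots> = (\<integral>\<^sup>+y. (\<integral>\<^sup>+x. f x y * indicator B y * indicator A x \<partial>lborel) \<partial>lborel)"
    by (rule lborel_pair.Fubini'[symmetric]) measurable
  also have "\<dots> = (\<integral>\<^sup>+y\<in>B. (\<integral>\<^sup>+x\<in>A. f x y \<partial>lborel) \<partial>lborel)"
    by (auto intro!: nn_integral_cong simp: indicator_def)
  finally show ?thesis .
qed

definition abs_exp_kernel :: "real \<Rightarrow> real \<Rightarrow> real \<Rightarrow> real \<Rightarrow> real \<Rightarrow> real \<Rightarrow> real \<Rightarrow> real \<Rightarrow> real \<Rightarrow> real"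
  where "abs_exp_kernel a b c d e s s' r r' =
    exp (- a * \<bar>r - r'\<bar> - b * \<bar>r - s\<bar> - c * \<bar>r' - s'\<bar> - d * \<bar>r - s'\<bar> - e * \<bar>r' - s\<bar>)"

lemma abs_exp_kernel_swap:
  "abs_exp_kernel a b c d e s s' r r' = abs_exp_kernel a c b e d s' s r' r"
  by (simp add: abs_exp_kernel_def abs_minus_commute algebra_simps)

lemma abs_exp_kernel_le_ordered:
  fixes s s' a b c d e :: real
  assumes "d \<ge> 0" "s \<le> s'" "r \<le> s"
  shows "abs_exp_kernel a b c d e s s' r r'
    \<le> exp (- min d e * \<bar>s - s'\<bar>) * exp (- (b + d) * (s - r))
      * exp (- (a * \<bar>r' - r\<bar> + c * \<bar>r' - s'\<bar> + e * \<bar>r' - s\<bar>))"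
proof -
  have "\<bar>r - s'\<bar> = (s' - s) + (s - r)" "\<bar>r - s\<bar> = s - r" "\<bar>s - s'\<bar> = s' - s"
    using assms by auto
  moreover have "min d e * (s' - s) \<le> d * (s' - s)"
    using assms by (intro mult_right_mono) auto
  ultimately show ?thesis
    by (simp add: abs_exp_kernel_def abs_minus_commute algebra_simps flip: exp_add)
qed

lemma abs_exp_kernel_double_integral_le_ordered:
  fixes s s' a b c d e :: real
  assumes "a > 0" "b > 0" "c > 0" "d > 0" "e > 0" and "s \<le> s'"
  shows "(\<integral>\<^sup>+ r \<in> {..s}. (\<integral>\<^sup>+ r' \<in> {..s'}. ennreal (abs_exp_kernel a b c d e s s' r r') \<partial>lborel) \<partial>lborel)
         \<le> ennreal (10 * exp (- min d e * \<bar>s - s'\<bar>)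
                 / ((b + d) * (c + e) + a * min (b + d) (c + e)))"
proof -
  define E where "E = exp (- min d e * \<bar>s - s'\<bar>)"
  define B where "B = b + d"
  define M where "M = max a (max c e)"
  define D where "D = (b + d) * (c + e) + a * min (b + d) (c + e)"
  have "B > 0" "M > 0" "E > 0" "D > 0"
    using assms by (auto simp: B_def M_def E_def D_def intro!: add_pos_pos)
  have inner: "(\<integral>\<^sup>+ r' \<in> {..s'}. ennreal (abs_exp_kernel a b c d e s s' r r') \<partial>lborel)
      \<le> ennreal (2 * E / M) * ennreal (exp (- B * (s - r)))"
    if "r \<le> s" for r
  proof -
    let ?L = "\<lambda>r'. exp (- (a * \<bar>r' - r\<bar> + c * \<bar>r' - s'\<bar> + e * \<bar>r' - s\<bar>))"
    have "(\<integral>\<^sup>+ r' \<in> {..s'}. ennreal (abs_exp_kernel a b c d e s s' r r') \<partial>lborel)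
        \<le> (\<integral>\<^sup>+ r'. ennreal (E * exp (- B * (s - r))) * ennreal (?L r') \<partial>lborel)"
    proof (rule nn_integral_mono)
      fix r'
      have "abs_exp_kernel a b c d e s s' r r' \<le> E * exp (- B * (s - r)) * ?L r'"
        unfolding E_def B_def using assms that by (intro abs_exp_kernel_le_ordered) auto
      then show "ennreal (abs_exp_kernel a b c d e s s' r r') * indicator {..s'} r'
          \<le> ennreal (E * exp (- B * (s - r))) * ennreal (?L r')"
        using \<open>E > 0\<close> by (auto simp: indicator_def simp flip: ennreal_mult intro: ennreal_leI)
    qed
    also have "\<dots> = ennreal (E * exp (- B * (s - r))) * (\<integral>\<^sup>+ r'. ennreal (?L r') \<partial>lborel)"
      by (rule nn_integral_cmult) simp
    also have "\<dots> \<le> ennreal (E * exp (- B * (s - r))) * ennreal (2 / M)"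
      unfolding M_def using assms by (intro mult_left_mono nn_integral_exp_neg_sum_abs_le) auto
    also have "\<dots> = ennreal (2 * E / M) * ennreal (exp (- B * (s - r)))"
      using \<open>E > 0\<close> \<open>M > 0\<close> by (simp flip: ennreal_mult add: mult_ac)
    finally show ?thesis .
  qed
  have "(\<integral>\<^sup>+ r \<in> {..s}. (\<integral>\<^sup>+ r' \<in> {..s'}. ennreal (abs_exp_kernel a b c d e s s' r r') \<partial>lborel) \<partial>lborel)
      \<le> (\<integral>\<^sup>+ r \<in> {..s}. ennreal (2 * E / M) * ennreal (exp (- B * (s - r))) \<partial>lborel)"
    using inner by (intro nn_integral_mono) (auto simp: indicator_def)
  also have "\<dots> = ennreal (2 * E / M) * ennreal (1 / B)"
    using nn_integral_exp_neg_atMost[OF \<open>B > 0\<close>, of s]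
    by (simp add: nn_integral_cmult mult.assoc)
  also have "\<dots> \<le> ennreal (10 * E / D)"
  proof -
    have "D \<le> B * (c + e + a)"
      using mult_left_mono[of "min (b + d) (c + e)" "b + d" a] assms
      by (simp add: D_def B_def algebra_simps)
    also have "\<dots> \<le> B * (3 * M)"
      using \<open>B > 0\<close> by (intro mult_left_mono) (auto simp: M_def)
    finally have "D \<le> B * (3 * M)" .
    have "2 * E / M * (1 / B) = 6 * E / (B * (3 * M))"
      by simp
    also have "\<dots> \<le> 6 * E / D"
      using \<open>D \<le> B * (3 * M)\<close> \<open>D > 0\<close> \<open>E > 0\<close> by (intro divide_left_mono) auto
    also have "\<dots> \<le> 10 * E / D"
      using \<open>D > 0\<close> \<open>E > 0\<close> by (intro divide_right_mono) auto
    finally show ?thesis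
      using \<open>E > 0\<close> \<open>M > 0\<close> \<open>B > 0\<close> by (simp add: ennreal_leI flip: ennreal_mult)
  qed
  finally show ?thesis unfolding E_def D_def .
qed

theorem propositionA8:
  fixes s s' a b c d e :: real
  assumes "a > 0" "b > 0" "c > 0" "d > 0" "e > 0"
  shows "(\<integral>\<^sup>+ r \<in> {..s}. (\<integral>\<^sup>+ r' \<in> {..s'}.
            ennreal (exp (- a * \<bar>r - r'\<bar> - b * \<bar>r - s\<bar> - c * \<bar>r' - s'\<bar>
                          - d * \<bar>r - s'\<bar> - e * \<bar>r' - s\<bar>)) \<partial>lborel) \<partial>lborel)
         \<le> ennreal (10 * exp (- min d e * \<bar>s - s'\<bar>)
                 / ((b + d) * (c + e) + a * min (b + d) (c + e)))"
proof (cases "s \<le> s'")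
  case True
  then show ?thesis
    using abs_exp_kernel_double_integral_le_ordered[OF assms True]
    by (simp add: abs_exp_kernel_def)
next
  case False
  have [measurable]: "(\<lambda>(r, r'). ennreal (abs_exp_kernel a b c d e s s' r r')) \<in> borel_measurable (lborel \<Otimes>\<^sub>M lborel)"
    unfolding abs_exp_kernel_def by measurable
  have "(\<integral>\<^sup>+ r \<in> {..s}. (\<integral>\<^sup>+ r' \<in> {..s'}. ennreal (abs_exp_kernel a b c d e s s' r r') \<partial>lborel) \<partial>lborel)
      = (\<integral>\<^sup>+ r' \<in> {..s'}. (\<integral>\<^sup>+ r \<in> {..s}. ennreal (abs_exp_kernel a b c d e s s' r r') \<partial>lborel) \<partial>lborel)"
    by (rule nn_integral_set_lborel_swap) simp_all
  also have "\<dots> = (\<integral>\<^sup>+ r' \<in> {..s'}. (\<integral>\<^sup>+ r \<in> {..s}. ennreal (abs_exp_kernel a c b e d s' s r' r) \<partial>lborel) \<partial>lborel)"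
    by (simp only: abs_exp_kernel_swap[of a b c d e s s'])
  also have "\<dots> \<le> ennreal (10 * exp (- min e d * \<bar>s' - s\<bar>)
                        / ((c + e) * (b + d) + a * min (c + e) (b + d)))"
    using False assms by (intro abs_exp_kernel_double_integral_le_ordered) auto
  finally show ?thesis
    by (simp add: abs_exp_kernel_def min.commute abs_minus_commute mult.commute)
qed

end
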